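(* For every integer $a\geq 1$, $$\sum_{n\geq 1}\frac{H_{2n-1}}{(2n-1)^{2a}}=\frac{2a+1}{2}\lambda(2a+1)-\sum_{j=1}^{a-1}\zeta(2a+1-2j)\lambda(2j),$$ where an empty sum equals $0$.
   Context: $H_n=1+\frac12+\cdots+\frac1n$. For real $s>1$, $\lambda(s)=\sum_{n\geq 1}\frac{1}{(2n-1)^s}=(1-2^{-s})\zeta(s)$, and $\zeta$ is the Riemann zeta function. *)

theory Defs
  imports "HOL-Analysis.Analysis"
begin

definition zeta :: "real \<Rightarrow> real" where
  "zeta s = (\<Sum>n. 1 / (real (Suc n)) powr s)"

text \<open>Dirichlet lambda function: lambda s = sum over n >= 1 of 1/(2n-1)^s = (1 - 2^(-s)) zeta s.\<close>
definition dlambda :: "real \<Rightarrow> real" where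
  "dlambda s = (1 - 2 powr (-s)) * zeta s"

end

theory Submission
  imports Defs "HOL-Real_Asymp.Real_Asymp"
begin

(* Let m run over the positive integers and k over the odd positive integers, and sum the double
   series of 1/((m^2 - k^2) m^(2a-1)) (terms with m = k omitted) in both orders.
   Summing over k first, sum_k 1/(m^2 - k^2) is -1/(4 m^2) for odd m and 0 for even m, which gives
   -lambda(2a+1)/4. Summing over m first, the partial fraction expansion of the geometric sum
   sum_{l=1}^{a-1} 1/(m^(2a+1-2l) k^(2l)) and the telescoping evaluation
   sum_m 1/(m (m^2 - k^2)) = (5/(4k) - H_k)/k^2 turn the inner sum into
   (a + 1/4)/k^(2a+1) - sum_l zeta(2a+1-2l)/k^(2l) - H_k/k^(2a); summing over k and comparing
   yields the formula. The bound H_m <= 2 sqrt m makes the double series absolutely convergent. *)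

lemma sums_diff_shift:
  fixes h :: "nat \<Rightarrow> 'a::real_normed_vector"
  assumes "h \<longlonglongrightarrow> 0"
  shows "(\<lambda>n. h (n + d) - h n) sums (- (\<Sum>n<d. h n))"
proof (induction d)
  case 0
  then show ?case by simp
next
  case (Suc d)
  have "(\<lambda>n. h (Suc n + d) - h (n + d)) sums (0 - h d)"
    using telescope_sums[OF LIMSEQ_ignore_initial_segment[OF assms, of d]] by simp
  from sums_add[OF Suc.IH this] show ?case
    by (simp add: algebra_simps)
qed

lemma sums_harm: "(\<lambda>n. 1/(real n + 1) - 1/(real n + 1 + real d)) sums harm d"
proof -
  have "(\<lambda>n. 1/(real n + 1)) \<longlonglongrightarrow> 0"
    by real_asymp
  from sums_minus[OF sums_diff_shift[OF this, of d]] show ?thesis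
    by (simp add: harm_altdef field_simps add_ac)
qed

lemma sum_lessThan_inverse_eq_harm: "(\<Sum>i<k. 1 / real i) = harm (k - 1)"
proof (cases k)
  case (Suc k')
  then show ?thesis
    unfolding Suc sum.lessThan_Suc_shift by (simp add: harm_altdef field_simps)
qed (simp add: harm_altdef)

lemma harm_le_2_sqrt: "harm n \<le> 2 * sqrt (real n)"
proof (induction n)
  case 0
  then show ?case by (simp add: harm_altdef)
next
  case (Suc n)
  define a where "a = sqrt (real n)"
  define c where "c = sqrt (real (Suc n))"
  have "a \<ge> 0" "a \<le> c" "c \<ge> 1"
    by (simp_all add: a_def c_def)
  have "1 = (c - a) * (c + a)"
    by (simp add: a_def c_def algebra_simps)
  also have "\<dots> \<le> (c - a) * (2 * c)"
    using \<open>a \<ge> 0\<close> \<open>a \<le> c\<close> by (intro mult_left_mono) auto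
  finally have "1 / c \<le> 2 * (c - a)"
    using \<open>c \<ge> 1\<close> by (simp add: field_simps)
  moreover have "1 / real (Suc n) = 1 / c^2"
    by (simp add: c_def)
  moreover have "1 / c^2 \<le> 1 / c"
    using \<open>c \<ge> 1\<close> by (simp add: power2_eq_square field_simps)
  ultimately have "1 / real (Suc n) \<le> 2 * (c - a)"
    by linarith
  then show ?case
    using Suc.IH by (simp add: harm_Suc inverse_eq_divide a_def c_def)
qed

lemma sums_zeta:
  assumes "r \<ge> 2"
  shows "(\<lambda>n. 1 / real (n+1)^r) sums zeta (real r)"
proof -
  have "summable (\<lambda>n. inverse (real (Suc n) ^ r))"
    using inverse_power_summable[OF assms] by (subst summable_Suc_iff)
  then show ?thesis
    by (simp add: zeta_def summable_sums powr_realpow inverse_eq_divide)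
qed

lemma sums_dlambda:
  assumes "r \<ge> 2"
  shows "(\<lambda>n. 1 / real (2*n+1)^r) sums dlambda (real r)"
proof -
  define z where "z = (\<lambda>n::nat. 1 / real (n+1)^r)"
  have z: "z sums zeta (real r)"
    unfolding z_def by (rule sums_zeta[OF assms])
  have pair: "sum z {n*2..<n*2+2} = 1 / real (2*n+1)^r + z n / 2^r" for n
  proof -
    have "real (n*2+1+1)^r = 2^r * real (n+1)^r"
      by (simp flip: power_mult_distrib add: algebra_simps)
    moreover have "{n*2..<n*2+2} = {n*2, n*2+1}"
      by auto
    ultimately show ?thesis
      by (simp add: z_def mult_ac)
  qed
  have "(\<lambda>n. sum z {n*2..<n*2+2}) sums zeta (real r)"
    using sums_group[OF z, of 2] by simp
  then have "(\<lambda>n. (1 / real (2*n+1)^r + z n / 2^r) - z n / 2^r) sums (zeta (real r) - zeta (real r) / 2^r)"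
    unfolding pair by (intro sums_diff sums_divide z)
  moreover have "dlambda (real r) = zeta (real r) - zeta (real r) / 2^r"
    by (simp add: dlambda_def powr_minus powr_realpow field_simps)
  ultimately show ?thesis
    by simp
qed

lemma sums_dlambda_odd:
  assumes "r \<ge> 2"
  shows "(\<lambda>j. if odd (j+1) then 1 / real (j+1)^r else 0) sums dlambda (real r)"
proof -
  have "(\<lambda>n. (\<lambda>j. if odd (j+1) then 1 / real (j+1)^r else 0) (2*n)) sums dlambda (real r)"
    using sums_dlambda[OF assms] by simp
  moreover have "strict_mono (\<lambda>n::nat. 2*n)"
    by (rule strict_monoI) simp
  ultimately show ?thesis
    by (subst (asm) sums_mono_reindex) (auto elim!: oddE)
qed

lemma inverse_sq_diff_times_partial_fractions:
  fixes x y :: real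
  assumes "x > 0" "y > 0" "x \<noteq> y"
  shows "1 / ((x^2 - y^2) * x) = ((1/(x+y) - 1/x) + (1/(x-y) - 1/x)) / (2*y^2)"
proof -
  have "x - y \<noteq> 0" "x + y \<noteq> 0" "x^2 - y^2 \<noteq> 0"
    using assms by (auto simp: power2_eq_iff_nonneg)
  then show ?thesis
    using assms by (simp add: divide_simps) (simp add: algebra_simps power2_eq_square)
qed

lemma inverse_sq_diff_partial_fractions:
  fixes x y :: real
  assumes "x > 0" "y > 0" "x \<noteq> y"
  shows "1 / (x^2 - y^2) = (1/(y+x) - 1/(y-x)) / (2*x)"
proof -
  have "y - x \<noteq> 0" "y + x \<noteq> 0" "x^2 - y^2 \<noteq> 0"
    using assms by (auto simp: power2_eq_iff_nonneg)
  then show ?thesis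
    using assms by (simp add: divide_simps) (simp add: algebra_simps power2_eq_square)
qed

lemma sums_minus_harm_pred:
  "(\<lambda>j. 1/(real (j+1) - real k) - 1/(real j + 1)) sums (- harm (k-1))"
proof -
  define T where "T = (\<lambda>j::nat. 1/(real (j+1) - real k) - 1/(real j + 1))"
  have "(\<Sum>j<k. 1/(real (j+1) - real k)) = (\<Sum>j<k. 1/(real (k - Suc j + 1) - real k))"
    by (rule sum.nat_diff_reindex[symmetric])
  also have "\<dots> = - (\<Sum>j<k. 1 / real j)"
    by (auto simp: sum_negf of_nat_diff intro!: sum.cong)
  finally have "(\<Sum>j<k. 1/(real (j+1) - real k)) = - harm (k-1)"
    by (simp add: sum_lessThan_inverse_eq_harm)
  moreover have "(\<Sum>j<k. 1/(real j + 1)) = harm k"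
    by (simp add: harm_altdef field_simps)
  ultimately have "(\<Sum>j<k. T j) = - harm (k-1) - harm k"
    by (simp add: T_def sum_subtractf)
  moreover have "(\<lambda>j. T (j + k)) sums harm k"
    using sums_harm[of k] by (simp add: T_def algebra_simps)
  ultimately show ?thesis
    unfolding T_def[symmetric] by (simp add: sums_iff_shift)
qed

lemma sums_inverse_sq_diff_mult:
  assumes "k \<ge> 1"
  shows "(\<lambda>j. 1 / ((real (j+1)^2 - real k^2) * real (j+1))) sums ((5/(4*real k) - harm k) / real k^2)"
proof -
  define T1 where "T1 = (\<lambda>j::nat. 1/(real j + 1 + real k) - 1/(real j + 1))"
  define T2 where "T2 = (\<lambda>j::nat. 1/(real (j+1) - real k) - 1/(real j + 1))"
  have T1: "T1 sums (- harm k)"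
    using sums_minus[OF sums_harm[of k]] by (simp add: T1_def)
  have T2: "T2 sums (- harm (k-1))"
    unfolding T2_def by (rule sums_minus_harm_pred)
  have "harm k = harm (k-1) + 1 / real k"
    using assms harm_Suc[of "k-1"] by (simp add: field_simps)
  then have closed_form: "(- harm k + - harm (k-1)) / (2*real k^2) + 3/(4*real k^3) = (5/(4*real k) - harm k) / real k^2"
    using assms by (simp add: field_simps power2_eq_square power3_eq_cube)
  \<comment> \<open>The term with \<open>j + 1 = k\<close> is \<open>1/0 = 0\<close>; the point mass at \<open>j = k - 1\<close> corrects for it.\<close>
  have partial_fractions: "1 / ((real (j+1)^2 - real k^2) * real (j+1)) =
      (T1 j + T2 j) / (2*real k^2) + (if j = k - 1 then 3/(4*real k^3) else 0)" for j
  proof (cases "j = k - 1")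
    case True
    then have "real (j+1) = real k"
      using assms by simp
    then show ?thesis
      using True assms by (simp add: T1_def T2_def field_simps power2_eq_square power3_eq_cube)
  next
    case False
    then have "real (j+1) \<noteq> real k"
      using assms by simp
    then show ?thesis
      using False assms inverse_sq_diff_times_partial_fractions[of "real (j+1)" "real k"]
      by (simp add: T1_def T2_def add_ac)
  qed
  have "(\<lambda>j. (T1 j + T2 j) / (2*real k^2) + (if j = k - 1 then 3/(4*real k^3) else 0))
     sums ((- harm k + - harm (k-1)) / (2*real k^2) + 3/(4*real k^3))"
    by (intro sums_add sums_divide T1 T2 sums_single[where f="\<lambda>_. 3/(4*real k^3)", simplified])
  then show ?thesis
    unfolding partial_fractions[symmetric] closed_form .
qed

lemma sum_inverse_odd_minus_eq_0: "(\<Sum>i<m. 1/(2*real i + 1 - real m)) = 0"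
proof -
  define h where "h = (\<lambda>i::nat. 1/(2*real i + 1 - real m))"
  have "(\<Sum>i<m. h i) = (\<Sum>i<m. h (m - Suc i))"
    by (rule sum.nat_diff_reindex[symmetric])
  also have "\<dots> = (\<Sum>i<m. - h i)"
  proof (rule sum.cong)
    fix i
    assume "i \<in> {..<m}"
    then have "2*real (m - Suc i) + 1 - real m = -(2*real i + 1 - real m)"
      by (simp add: of_nat_diff)
    then show "h (m - Suc i) = - h i"
      by (simp only: h_def divide_minus_right)
  qed simp
  also have "\<dots> = - (\<Sum>i<m. h i)"
    by (simp add: sum_negf)
  finally show ?thesis
    unfolding h_def by simp
qed

lemma sums_inverse_sq_diff_odd:
  assumes "m \<ge> 1"
  shows "(\<lambda>i. 1 / (real m^2 - real (2*i+1)^2)) sums (if odd m then -1/(4*real m^2) else 0)"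
proof -
  define h where "h = (\<lambda>i::nat. 1/(2*real i + 1 - real m))"
  have "h \<longlonglongrightarrow> 0"
    unfolding h_def by real_asymp
  moreover have "(\<Sum>i<m. h i) = 0"
    unfolding h_def by (rule sum_inverse_odd_minus_eq_0)
  ultimately have "(\<lambda>i. (h (i+m) - h i) / (2*real m)) sums 0"
    using sums_divide[OF sums_diff_shift, of h m "2*real m"] by simp
  moreover have "(\<lambda>i. if i = m div 2 \<and> odd m then 1/(4*real m^2) else 0) sums (if odd m then 1/(4*real m^2) else 0)"
    by (cases "odd m") (simp_all add: sums_single[of "m div 2" "\<lambda>_. 1/(4*real m^2)", simplified])
  moreover have "1 / (real m^2 - real (2*i+1)^2) =
      (h (i+m) - h i) / (2*real m) - (if i = m div 2 \<and> odd m then 1/(4*real m^2) else 0)" for i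
  proof (cases "2*i+1 = m")
    case True
    then show ?thesis
      by (auto simp: h_def power2_eq_square algebra_simps)
  next
    case False
    then have "real m \<noteq> real (2*i+1)"
      by linarith
    moreover have "\<not> (i = m div 2 \<and> odd m)"
      using False by presburger
    ultimately show ?thesis
      using False assms inverse_sq_diff_partial_fractions[of "real m" "real (2*i+1)"]
      by (auto simp: h_def add_ac)
  qed
  ultimately show ?thesis
    using sums_diff by fastforce
qed

(* At x = y both fractions on the right are 1/0 = 0. *)
lemma sum_mixed_inverse_powers:
  fixes x y :: real
  assumes "x > 0" "y > 0"
  shows "(\<Sum>l=1..b. 1 / (x^(2*b+3-2*l) * y^(2*l))) =
    1 / ((x^2 - y^2) * x * y^(2*b)) - 1 / ((x^2 - y^2) * x^(2*b+1)) + (if x = y then real b / y^(2*b+3) else 0)"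
proof (cases "x = y")
  case True
  have "(\<Sum>l=1..b. 1 / (y^(2*b+3-2*l) * y^(2*l))) = (\<Sum>l=1..b. 1 / y^(2*b+3))"
    by (intro sum.cong) (auto simp flip: power_add)
  then show ?thesis
    using True by simp
next
  case False
  have "x^2 - y^2 \<noteq> 0"
    using assms False by (auto simp: power2_eq_iff_nonneg)
  have "(\<Sum>l=1..b. 1 / (x^(2*b+3-2*l) * y^(2*l))) =
      1 / ((x^2 - y^2) * x * y^(2*b)) - 1 / ((x^2 - y^2) * x^(2*b+1))"
  proof (induction b)
    case 0
    then show ?case by simp
  next
    case (Suc b)
    have shift: "(\<Sum>l=1..b. 1 / (x^(2*Suc b+3-2*l) * y^(2*l))) = (\<Sum>l=1..b. 1 / (x^(2*b+3-2*l) * y^(2*l))) / x^2"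
      unfolding sum_divide_distrib
    proof (intro sum.cong refl)
      fix l
      assume "l \<in> {1..b}"
      then have "2*Suc b+3-2*l = (2*b+3-2*l) + 2"
        by auto
      then show "1 / (x^(2*Suc b+3-2*l) * y^(2*l)) = 1 / (x^(2*b+3-2*l) * y^(2*l)) / x^2"
        by (simp only: power_add) simp
    qed
    have "(\<Sum>l=1..Suc b. 1 / (x^(2*Suc b+3-2*l) * y^(2*l))) =
        (\<Sum>l=1..b. 1 / (x^(2*Suc b+3-2*l) * y^(2*l))) + 1 / (x^3 * y^(2*Suc b))"
      by (simp add: sum.cl_ivl_Suc)
    also have "\<dots> = (1 / ((x^2 - y^2) * x * y^(2*b)) - 1 / ((x^2 - y^2) * x^(2*b+1))) / x^2 + 1 / (x^3 * y^(2*Suc b))"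
      unfolding shift Suc.IH ..
    also have "\<dots> = 1 / ((x^2 - y^2) * x * y^(2*Suc b)) - 1 / ((x^2 - y^2) * x^(2*Suc b+1))"
      using assms \<open>x^2 - y^2 \<noteq> 0\<close>
      by (simp add: divide_simps power_add) (simp add: algebra_simps power2_eq_square eval_nat_numeral)
    finally show ?case .
  qed
  then show ?thesis
    using False by simp
qed

lemma abs_inverse_sq_diff_le:
  fixes x y :: real
  assumes "x > 0" "y > 0"
  shows "\<bar>1 / (x^2 - y^2)\<bar> \<le> - (1 / (x^2 - y^2)) + 2 * (if y < x then 1 / (x * (x - y)) else 0)"
proof (cases "y < x")
  case True
  have "(x - y) * x \<le> (x - y) * (x + y)"
    using assms True by (intro mult_left_mono) auto
  then have "1 / ((x - y) * (x + y)) \<le> 1 / (x * (x - y))"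
    using assms True by (simp add: frac_le mult.commute)
  moreover have "x^2 - y^2 = (x - y) * (x + y)"
    by (simp add: power2_eq_square algebra_simps)
  ultimately show ?thesis
    using assms True by simp
next
  case False
  then have "x^2 - y^2 \<le> 0"
    using assms by (simp add: power_mono)
  then show ?thesis
    using False by (simp add: divide_nonpos_nonneg abs_if)
qed

lemma sum_inverse_dist_odd_le_harm:
  "(\<Sum>i | 2*i+1 < m. 1 / (real m - real (2*i+1))) \<le> harm m"
proof -
  have "inj_on (\<lambda>i::nat. 2*i+1) {i. 2*i+1 < m}"
    by (auto simp: inj_on_def)
  then have "(\<Sum>i | 2*i+1 < m. 1 / (real m - real (2*i+1))) =
      (\<Sum>k\<in>(\<lambda>i. 2*i+1) ` {i. 2*i+1 < m}. 1 / (real m - real k))"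
    by (simp add: sum.reindex)
  also have "\<dots> \<le> (\<Sum>k<m. 1 / (real m - real k))"
    by (rule sum_mono2) auto
  also have "\<dots> = (\<Sum>i<m. 1 / (real m - real (m - Suc i)))"
    by (rule sum.nat_diff_reindex[symmetric])
  also have "\<dots> = harm m"
    by (auto simp: harm_altdef of_nat_diff field_simps intro!: sum.cong)
  finally show ?thesis .
qed

lemma summable_abs_inverse_sq_diff_odd:
  assumes "m \<ge> 1"
  shows "summable (\<lambda>i. \<bar>1 / (real m^2 - real (2*i+1)^2)\<bar>)"
    and "(\<Sum>i. \<bar>1 / (real m^2 - real (2*i+1)^2)\<bar>) \<le> 1 / (4 * real m^2) + 2 * harm m / real m"
proof -
  define D where "D = (\<lambda>i. - (1 / (real m^2 - real (2*i+1)^2)) +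
    2 * (if 2*i+1 < m then 1 / (real m * (real m - real (2*i+1))) else 0))"
  define F where "F = (\<Sum>i | 2*i+1 < m. 1 / (real m * (real m - real (2*i+1))))"
  have "finite {i. 2*i+1 < m}"
    by (rule finite_subset[of _ "{..m}"]) auto
  then have D: "D sums (- (if odd m then -1 / (4 * real m^2) else 0) + 2 * F)"
    unfolding D_def F_def
    by (intro sums_add sums_minus sums_mult sums_inverse_sq_diff_odd assms sums_If_finite)
  have "F = (\<Sum>i | 2*i+1 < m. 1 / (real m - real (2*i+1))) / real m"
    by (simp add: F_def sum_divide_distrib mult.commute)
  then have "F \<le> harm m / real m"
    using sum_inverse_dist_odd_le_harm[of m] by (simp add: divide_right_mono)
  moreover have "- (if odd m then -1 / (4 * real m^2) else 0) \<le> 1 / (4 * real m^2)"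
    by simp
  ultimately have "summable D" "suminf D \<le> 1 / (4 * real m^2) + 2 * harm m / real m"
    using D by (simp_all add: sums_iff)
  have le: "norm \<bar>1 / (real m^2 - real (2*i+1)^2)\<bar> \<le> D i" for i
  proof -
    have "real m > 0" "real (2*i+1) > 0"
      using assms by auto
    from abs_inverse_sq_diff_le[OF this] show ?thesis
      unfolding D_def of_nat_less_iff real_norm_def abs_abs .
  qed
  show summable: "summable (\<lambda>i. \<bar>1 / (real m^2 - real (2*i+1)^2)\<bar>)"
    by (rule summable_comparison_test'[OF \<open>summable D\<close> le])
  have "(\<Sum>i. \<bar>1 / (real m^2 - real (2*i+1)^2)\<bar>) \<le> suminf D"
    using le by (intro suminf_le summable \<open>summable D\<close>) simp
  with \<open>suminf D \<le> _\<close> show "(\<Sum>i. \<bar>1 / (real m^2 - real (2*i+1)^2)\<bar>) \<le> 1 / (4 * real m^2) + 2 * harm m / real m"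
    by linarith
qed

lemma suminf_abs_inverse_sq_diff_odd_div_power_le:
  assumes "r \<ge> 1" "m \<ge> 1"
  shows "(\<Sum>i. \<bar>1 / (real m^2 - real (2*i+1)^2)\<bar>) / real m^r \<le> 1 / (4 * real m^3) + 4 * real m powr (-3/2)"
proof -
  have "real m \<le> real m^r"
    using assms by (metis of_nat_1 of_nat_le_iff power_increasing power_one_right)
  have "(\<Sum>i. \<bar>1 / (real m^2 - real (2*i+1)^2)\<bar>) / real m^r \<le> (1 / (4 * real m^2) + 2 * harm m / real m) / real m^r"
    using assms by (intro divide_right_mono summable_abs_inverse_sq_diff_odd) simp_all
  also have "\<dots> \<le> (1 / (4 * real m^2) + 2 * harm m / real m) / real m"
    using assms \<open>real m \<le> real m^r\<close> harm_nonneg[of m]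
    by (intro divide_left_mono add_nonneg_nonneg divide_nonneg_nonneg) auto
  also have "\<dots> = 1 / (4 * real m^3) + 2 * harm m / real m^2"
    using assms by (simp add: field_simps power2_eq_square power3_eq_cube)
  also have "\<dots> \<le> 1 / (4 * real m^3) + 4 * sqrt (real m) / real m^2"
    using harm_le_2_sqrt[of m] by (simp add: divide_right_mono)
  also have "\<dots> = 1 / (4 * real m^3) + 4 * real m powr (-3/2)"
  proof -
    have "real m powr (1/2 - 2) = real m powr (1/2) / real m powr 2"
      by (rule powr_diff)
    then show ?thesis
      using assms by (simp add: powr_half_sqrt)
  qed
  finally show ?thesis .
qed

lemma summable_on_inverse_sq_diff_odd_pairs:
  assumes "r \<ge> 1"
  shows "(\<lambda>(j,i). 1 / ((real (j+1)^2 - real (2*i+1)^2) * real (j+1)^r)) summable_on UNIV \<times> UNIV"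
proof -
  define S where "S = (\<lambda>j. (\<Sum>i. \<bar>1 / (real (j+1)^2 - real (2*i+1)^2)\<bar>) / real (j+1)^r)"
  have rows: "((\<lambda>i. norm (1 / ((real (j+1)^2 - real (2*i+1)^2) * real (j+1)^r))) has_sum S j) UNIV" for j
  proof -
    have "summable (\<lambda>i. \<bar>1 / (real (j+1)^2 - real (2*i+1)^2)\<bar>)"
      by (rule summable_abs_inverse_sq_diff_odd) simp
    then have "(\<lambda>i. \<bar>1 / (real (j+1)^2 - real (2*i+1)^2)\<bar> / real (j+1)^r) sums S j"
      unfolding S_def by (intro sums_divide summable_sums)
    moreover have "norm (1 / ((real (j+1)^2 - real (2*i+1)^2) * real (j+1)^r)) =
        \<bar>1 / (real (j+1)^2 - real (2*i+1)^2)\<bar> / real (j+1)^r" for i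
      by (simp add: abs_mult)
    ultimately show ?thesis
      by (intro sums_nonneg_imp_has_sum) simp_all
  qed
  have S_le: "S j \<le> 1 / (4 * real (j+1)^3) + 4 * real (j+1) powr (-3/2)" for j
    unfolding S_def using assms by (rule suminf_abs_inverse_sq_diff_odd_div_power_le) simp
  have bound_summable: "summable (\<lambda>j. 1 / (4 * real (j+1)^3) + 4 * real (j+1) powr (-3/2))"
  proof (intro summable_add summable_mult)
    show "summable (\<lambda>j. 1 / (4 * real (j+1)^3))"
      using summable_divide[OF sums_summable[OF sums_zeta[of 3]], of 4] by (simp add: mult.commute)
    have "summable (\<lambda>n. real n powr (-3/2))"
      by (simp add: summable_real_powr_iff)
    then have "summable (\<lambda>n. real (Suc n) powr (-3/2))"
      by (subst summable_Suc_iff)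
    then show "summable (\<lambda>j. real (j+1) powr (-3/2))"
      by simp
  qed
  have S_nonneg: "S j \<ge> 0" for j
    using has_sum_nonneg[OF rows] by simp
  have "summable S"
  proof (rule summable_comparison_test'[OF bound_summable])
    show "norm (S j) \<le> 1 / (4 * real (j+1)^3) + 4 * real (j+1) powr (-3/2)" for j
      using S_le[of j] S_nonneg[of j] by (simp only: real_norm_def abs_of_nonneg)
  qed
  then have "S summable_on UNIV"
    using S_nonneg by (simp add: summable_on_UNIV_nonneg_real_iff)
  then have "(\<lambda>x. norm ((\<lambda>(j,i). 1 / ((real (j+1)^2 - real (2*i+1)^2) * real (j+1)^r)) x)) summable_on UNIV \<times> UNIV"
    using rows by (intro summable_on_SigmaI[where g = S]) simp_all
  then show ?thesis
    by (rule abs_summable_summable)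
qed

lemma sums_swap_of_summable_on:
  fixes f :: "nat \<Rightarrow> nat \<Rightarrow> real"
  assumes summable: "(\<lambda>(j,i). f j i) summable_on UNIV \<times> UNIV"
    and rows: "\<And>j. (\<lambda>i. f j i) sums r j" and "r sums S"
    and cols: "\<And>i. (\<lambda>j. f j i) sums c i"
  shows "c sums S"
proof -
  have has_sum_of_sums: "(g has_sum s) UNIV" if "g summable_on UNIV" "g sums s" for g :: "nat \<Rightarrow> real" and s
  proof -
    have "(g has_sum infsum g UNIV) UNIV"
      using that(1) by (rule has_sum_infsum)
    moreover from this have "infsum g UNIV = s"
      using that(2) has_sum_imp_sums sums_unique2 by blast
    ultimately show ?thesis
      by simp
  qed
  obtain X where X: "((\<lambda>(j,i). f j i) has_sum X) (UNIV \<times> UNIV)"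
    using summable summable_on_def by blast
  have "(r has_sum X) UNIV"
    using X by (rule has_sum_Sigma') (use summable_on_SigmaD1[OF summable] rows has_sum_of_sums in auto)
  with \<open>r sums S\<close> have "S = X"
    using has_sum_imp_sums sums_unique2 by blast
  have X': "((\<lambda>(i,j). f j i) has_sum X) (UNIV \<times> UNIV)"
    using X by (subst (asm) has_sum_swap) (simp add: case_prod_unfold)
  then have "(c has_sum X) UNIV"
    by (rule has_sum_Sigma')
      (use summable_on_SigmaD1[OF has_sum_imp_summable[OF X']] cols has_sum_of_sums in auto)
  with \<open>S = X\<close> show ?thesis
    by (simp add: has_sum_imp_sums)
qed

lemma sums_inverse_sq_diff_mult_power:
  assumes "k \<ge> 1"
  shows "(\<lambda>j. 1 / ((real (j+1)^2 - real k^2) * real (j+1)^(2*b+1))) sums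
    ((real b + 5/4) / real k^(2*b+3) - (\<Sum>l=1..b. zeta (real (2*b+3-2*l)) / real k^(2*l))
      - harm k / real k^(2*b+2))"
proof -
  define Z where "Z = (\<Sum>l=1..b. zeta (real (2*b+3-2*l)) / real k^(2*l))"
  have "(\<lambda>j. \<Sum>l=1..b. 1 / real (j+1)^(2*b+3-2*l) / real k^(2*l)) sums Z"
    unfolding Z_def by (intro sums_sum sums_divide sums_zeta) auto
  moreover have "(\<lambda>j. 1 / ((real (j+1)^2 - real k^2) * real (j+1)) / real k^(2*b))
      sums ((5/(4*real k) - harm k) / real k^2 / real k^(2*b))"
    by (intro sums_divide sums_inverse_sq_diff_mult assms)
  moreover have "(\<lambda>j. if j = k - 1 then real b / real k^(2*b+3) else 0) sums (real b / real k^(2*b+3))"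
    by (rule sums_single)
  ultimately have combined: "(\<lambda>j. 1 / ((real (j+1)^2 - real k^2) * real (j+1)) / real k^(2*b)
      - (\<Sum>l=1..b. 1 / real (j+1)^(2*b+3-2*l) / real k^(2*l))
      + (if j = k - 1 then real b / real k^(2*b+3) else 0))
      sums ((5/(4*real k) - harm k) / real k^2 / real k^(2*b) - Z + real b / real k^(2*b+3))"
    by (intro sums_add sums_diff)
  have identity: "1 / ((real (j+1)^2 - real k^2) * real (j+1)^(2*b+1)) =
      1 / ((real (j+1)^2 - real k^2) * real (j+1)) / real k^(2*b)
      - (\<Sum>l=1..b. 1 / real (j+1)^(2*b+3-2*l) / real k^(2*l))
      + (if j = k - 1 then real b / real k^(2*b+3) else 0)" for j
  proof -
    have "(real (j+1) = real k) = (j = k - 1)"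
      using assms by auto
    then show ?thesis
      using sum_mixed_inverse_powers[of "real (j+1)" "real k" b] assms by (simp add: mult_ac)
  qed
  have closed_form: "(5/(4*real k) - harm k) / real k^2 / real k^(2*b) - Z + real b / real k^(2*b+3) =
      (real b + 5/4) / real k^(2*b+3) - Z - harm k / real k^(2*b+2)"
    using assms by (simp add: field_simps power_add eval_nat_numeral)
  show ?thesis
    using combined unfolding identity Z_def[symmetric] closed_form .
qed

lemma sums_harm_odd_div_power:
  "(\<lambda>n. harm (2*n+1) / real (2*n+1)^(2*b+2)) sums
    ((real b + 3/2) * dlambda (real (2*b+3))
      - (\<Sum>l=1..b. zeta (real (2*b+3-2*l)) * dlambda (real (2*l))))"
proof -
  define L where "L = dlambda (real (2*b+3))"
  define V where "V = (\<lambda>k::nat. (real b + 5/4) / real k^(2*b+3)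
    - (\<Sum>l=1..b. zeta (real (2*b+3-2*l)) / real k^(2*l)) - harm k / real k^(2*b+2))"
  have row_sums: "(\<lambda>j. -(1/4) * (if odd (j+1) then 1 / real (j+1)^(2*b+3) else 0)) sums (-(1/4) * L)"
    unfolding L_def by (intro sums_mult sums_dlambda_odd) simp
  have rows: "(\<lambda>i. 1 / ((real (j+1)^2 - real (2*i+1)^2) * real (j+1)^(2*b+1))) sums
      (-(1/4) * (if odd (j+1) then 1 / real (j+1)^(2*b+3) else 0))" for j
  proof -
    have "(if odd (j+1) then -1 / (4 * real (j+1)^2) else 0) / real (j+1)^(2*b+1) =
        -(1/4) * (if odd (j+1) then 1 / real (j+1)^(2*b+3) else 0)"
      by (simp add: power_add eval_nat_numeral)
    then show ?thesis
      using sums_divide[OF sums_inverse_sq_diff_odd[of "j+1"], of "real (j+1)^(2*b+1)"]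
      unfolding divide_divide_eq_left by simp
  qed
  have cols: "(\<lambda>j. 1 / ((real (j+1)^2 - real (2*i+1)^2) * real (j+1)^(2*b+1))) sums V (2*i+1)" for i
    unfolding V_def by (rule sums_inverse_sq_diff_mult_power) simp
  have "(\<lambda>i. V (2*i+1)) sums (-(1/4) * L)"
    using summable_on_inverse_sq_diff_odd_pairs[of "2*b+1"] rows row_sums cols
    by (rule sums_swap_of_summable_on) simp
  moreover have "(\<lambda>i. (real b + 5/4) / real (2*i+1)^(2*b+3)) sums ((real b + 5/4) * L)"
    unfolding L_def using sums_mult[OF sums_dlambda[of "2*b+3"], of "real b + 5/4"] by simp
  moreover have "(\<lambda>i. \<Sum>l=1..b. zeta (real (2*b+3-2*l)) * (1 / real (2*i+1)^(2*l))) sums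
      (\<Sum>l=1..b. zeta (real (2*b+3-2*l)) * dlambda (real (2*l)))"
    by (intro sums_sum sums_mult sums_dlambda) auto
  ultimately have "(\<lambda>i. (real b + 5/4) / real (2*i+1)^(2*b+3)
      - (\<Sum>l=1..b. zeta (real (2*b+3-2*l)) * (1 / real (2*i+1)^(2*l))) - V (2*i+1)) sums
      ((real b + 5/4) * L - (\<Sum>l=1..b. zeta (real (2*b+3-2*l)) * dlambda (real (2*l))) - (-(1/4) * L))"
    by (intro sums_diff)
  then show ?thesis
    by (simp add: V_def L_def algebra_simps)
qed

theorem mainTheorem15:
  fixes a :: nat
  assumes "a \<ge> 1"
  shows "(\<lambda>n. harm (2*n+1) / (real (2*n+1)) ^ (2*a)) sums
           ((2 * real a + 1) / 2 * dlambda (2 * real a + 1)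
            - (\<Sum>j=1..a-1. zeta (real (2*a+1-2*j)) * dlambda (real (2*j))))"
proof -
  obtain b where a: "a = Suc b"
    using assms by (cases a) auto
  have "(2 * real a + 1) / 2 = real b + 3/2" "2 * real a + 1 = real (2*b+3)" "a - 1 = b"
    "2*a+1 = 2*b+3" "2*a = 2*b+2"
    by (simp_all add: a)
  then show ?thesis
    using sums_harm_odd_div_power[of b] by (simp only:)
qed

end
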